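(* Let $0<\varepsilon'<1$ and $\varepsilon=\varepsilon'/2$. Algorithm A run on $G$ with parameter $\varepsilon$ terminates and outputs a matching $M$ of $G$ with $w(M)\ge(1-\varepsilon')\,w(M^* )$, where $M^*$ is a maximum weight matching of $G$.
   Context: Let $G=(U\cup V,E)$ be a bipartite graph with real edge weights $w(uv)\ge 1$ for all $uv\in E$, $N(x)$ the neighbourhood of vertex $x$, and $w(F)=\sum_{e\in F}w(e)$. For $0<\varepsilon<1$ let $\mathrm{iLog}(x)=\lfloor\log_{1+\varepsilon}x\rfloor$, $k_{max}=\mathrm{iLog}(\max_{e\in E}w(e))$, $k_{min}$ the smallest integer with $(1+\varepsilon)^{-k_{min}}\le\varepsilon$, and $j_{uv}=\mathrm{iLog}(w(uv))$. Algorithm A (MultiplicativeAuction): set $M=\emptyset$, $y_u=0$ for all $u\in U$, $j_v=k_{max}$ for all $v\in V$. For each $v\in V$ build a queue $Q_v$ containing the pair $(i,uv)$ for every $u\in N(v)$ and every integer $i$ with $-k_{min}\le i\le j_{uv}$, ordered so that the first components are non-increasing (ties arbitrary). Then for each $v\in V$ (in arbitrary order) call $\textsc{MatchR}(v)$, and finally output $M$. Here $\textsc{MatchR}(v)$ is: while $Q_v$ is nonempty: remove the first pair $(j,uv)$ of $Q_v$; set $j_v\leftarrow j$; let $\mathrm{util}(uv)=w(uv)-y_u$ (with the current $y_u$); if $\mathrm{util}(uv)\ge(1+\varepsilon)^j$ then set $y_u\leftarrow y_u+\varepsilon\cdot\mathrm{util}(uv)$, and if $u$ is currently matched in $M$ to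 some $v'$, replace $uv'$ by $uv$ in $M$, call $\textsc{MatchR}(v')$ and then return; otherwise add $uv$ to $M$ and return. (If the test fails, continue the while-loop.) *)

theory Defs
  imports Main "HOL-Library.Multiset" Complex_Main
begin

text \<open>Bipartite graph: U :: 'u set, V :: 'v set, edges E \<subseteq> U \<times> V, an edge uv is the pair (u,v).\<close>

definition is_matching :: "('u \<times> 'v) set \<Rightarrow> ('u \<times> 'v) set \<Rightarrow> bool" where
  "is_matching E M \<longleftrightarrow> M \<subseteq> E \<and>
     (\<forall>u v v'. (u,v) \<in> M \<longrightarrow> (u,v') \<in> M \<longrightarrow> v = v') \<and>
     (\<forall>u u' v. (u,v) \<in> M \<longrightarrow> (u',v) \<in> M \<longrightarrow> u = u')"

definition nbh :: "('u \<times> 'v) set \<Rightarrow> 'v \<Rightarrow> 'u set" where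
  "nbh E v = {u. (u,v) \<in> E}"

definition iLog :: "real \<Rightarrow> real \<Rightarrow> int" where
  "iLog eps x = \<lfloor>log (1 + eps) x\<rfloor>"

definition kmax :: "real \<Rightarrow> ('u \<times> 'v) set \<Rightarrow> ('u \<times> 'v \<Rightarrow> real) \<Rightarrow> int" where
  "kmax eps E w = iLog eps (Max (w ` E))"

definition kmin :: "real \<Rightarrow> int" where
  "kmin eps = int (LEAST k::nat. (1 + eps) powr (- real k) \<le> eps)"

definition jedge :: "real \<Rightarrow> ('u \<times> 'v \<Rightarrow> real) \<Rightarrow> 'u \<times> 'v \<Rightarrow> int" where
  "jedge eps w e = iLog eps (w e)"

definition valid_queue ::
  "real \<Rightarrow> ('u \<times> 'v) set \<Rightarrow> ('u \<times> 'v \<Rightarrow> real) \<Rightarrow> 'v \<Rightarrow> (int \<times> ('u \<times> 'v)) list \<Rightarrow> bool" where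
  "valid_queue eps E w v q \<longleftrightarrow>
     distinct q \<and>
     set q = {(i, (u, v)) | i u. u \<in> nbh E v \<and> - kmin eps \<le> i \<and> i \<le> jedge eps w (u, v)} \<and>
     sorted_wrt (\<lambda>a b. fst a \<ge> fst b) q"

type_synonym ('u,'v) state =
  "('u \<times> 'v) set \<times> ('u \<Rightarrow> real) \<times> ('v \<Rightarrow> int) \<times> ('v \<Rightarrow> (int \<times> ('u \<times> 'v)) list)"
  \<comment> \<open>(M, y, j, Q)\<close>

text \<open>Big-step semantics of MatchR(c): matchR eps w c s s' means that the call MatchR(c)
  started in state s terminates in state s'. The recursive call followed by return is a tail call.\<close>
inductive matchR :: "real \<Rightarrow> ('u \<times> 'v \<Rightarrow> real) \<Rightarrow> 'v \<Rightarrow> ('u,'v) state \<Rightarrow> ('u,'v) state \<Rightarrow> bool"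
  for eps w where
  empty: "Q c = [] \<Longrightarrow> matchR eps w c (M, y, jv, Q) (M, y, jv, Q)"
| fail: "\<lbrakk> Q c = (j, (u, v)) # rest; w (u, v) - y u < (1 + eps) powr (real_of_int j);
          matchR eps w c (M, y, jv(c := j), Q(c := rest)) s' \<rbrakk>
         \<Longrightarrow> matchR eps w c (M, y, jv, Q) s'"
| free: "\<lbrakk> Q c = (j, (u, v)) # rest; w (u, v) - y u \<ge> (1 + eps) powr (real_of_int j);
          \<not> (\<exists>v'. (u, v') \<in> M) \<rbrakk>
         \<Longrightarrow> matchR eps w c (M, y, jv, Q)
               (insert (u, v) M, y(u := y u + eps * (w (u, v) - y u)), jv(c := j), Q(c := rest))"
| steal: "\<lbrakk> Q c = (j, (u, v)) # rest; w (u, v) - y u \<ge> (1 + eps) powr (real_of_int j);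
          (u, v') \<in> M;
          matchR eps w v' (insert (u, v) (M - {(u, v')}), y(u := y u + eps * (w (u, v) - y u)),
                           jv(c := j), Q(c := rest)) s' \<rbrakk>
         \<Longrightarrow> matchR eps w c (M, y, jv, Q) s'"

inductive alg_loop :: "real \<Rightarrow> ('u \<times> 'v \<Rightarrow> real) \<Rightarrow> 'v list \<Rightarrow> ('u,'v) state \<Rightarrow> ('u,'v) state \<Rightarrow> bool"
  for eps w where
  nil: "alg_loop eps w [] s s"
| cons: "\<lbrakk> matchR eps w c s s'; alg_loop eps w cs s' s'' \<rbrakk> \<Longrightarrow> alg_loop eps w (c # cs) s s''"

definition algA :: "real \<Rightarrow> ('u \<times> 'v) set \<Rightarrow> ('u \<times> 'v \<Rightarrow> real) \<Rightarrow>
    ('v \<Rightarrow> (int \<times> ('u \<times> 'v)) list) \<Rightarrow> 'v list \<Rightarrow> ('u \<times> 'v) set \<Rightarrow> bool" where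
  "algA eps E w Q0 vs M \<longleftrightarrow>
     (\<exists>y jv Q. alg_loop eps w vs ({}, (\<lambda>_. 0), (\<lambda>_. kmax eps E w), Q0) (M, y, jv, Q))"

end

theory Submission
  imports Defs
begin

text \<open>Prices y only increase, and a queue entry (i, uv) is removed only once the bid at
  level (1 + eps)^i fails, so it keeps failing. Hence at the end every edge uv has utility
  w(uv) - y u below (1 + eps)^(j_v + 1) if v is matched, where j_v is the level of v's last
  bid, and below (1 + eps)^(-kmin) \<le> eps \<le> eps w(uv) if v is unmatched (its queue is
  exhausted). Thus y u / (1 - eps) on U together with (1 + eps)^(j_v + 1) on matched v \<in> V
  is a fractional vertex cover of the weights supported on matched vertices. A matched
  edge uv keeps utility at least (1 - eps)(1 + eps)^(j_v), so the cover costs at most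
  w(M) / (1 - 2 eps), and weak duality bounds w(M*) by the cost of any cover.
  Termination: every step of MatchR removes a queue entry.\<close>

lemma kmin_nonneg: "0 \<le> kmin eps"
  by (simp add: kmin_def)

lemma level_neg_kmin_le:
  fixes eps :: real
  assumes "0 < eps"
  shows "(1 + eps) powr (- real_of_int (kmin eps)) \<le> eps"
proof -
  obtain n where n: "1 / eps < (1 + eps) ^ n"
    using real_arch_pow[of "1 + eps" "1 / eps"] assms by auto
  have "(1 + eps) powr (- real n) \<le> eps"
    using n assms by (simp add: powr_minus powr_realpow field_simps)
  then have "(1 + eps) powr (- real (LEAST k::nat. (1 + eps) powr (- real k) \<le> eps)) \<le> eps"
    by (rule LeastI)
  then show ?thesis
    by (simp add: kmin_def)
qed

lemma iLog_nonneg: "0 < eps \<Longrightarrow> 1 \<le> x \<Longrightarrow> 0 \<le> iLog eps x"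
  by (simp add: iLog_def)

lemma less_powr_iLog_succ:
  fixes eps x :: real
  assumes "0 < eps" "0 < x"
  shows "x < (1 + eps) powr (real_of_int (iLog eps x) + 1)"
proof -
  have "(1 + eps) powr (log (1 + eps) x) < (1 + eps) powr (real_of_int (iLog eps x) + 1)"
    unfolding iLog_def by (rule powr_less_mono) (use assms in linarith)+
  then show ?thesis
    using assms by simp
qed

lemma sum_le_dual_cover:
  fixes f :: "'u \<Rightarrow> real" and g :: "'v \<Rightarrow> real"
  assumes "finite U" "finite V" "E \<subseteq> U \<times> V" "is_matching E M"
    and "\<forall>u. 0 \<le> f u" "\<forall>v. 0 \<le> g v" "\<forall>(u, v)\<in>E. w (u, v) \<le> f u + g v"
  shows "sum w M \<le> sum f U + sum g V"
proof -
  have M: "M \<subseteq> U \<times> V" "inj_on fst M" "inj_on snd M"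
    using assms(3,4) by (auto simp: is_matching_def inj_on_def)
  have "sum w M \<le> (\<Sum>e\<in>M. f (fst e) + g (snd e))"
  proof (rule sum_mono)
    fix e assume "e \<in> M"
    with assms(4,7) show "w e \<le> f (fst e) + g (snd e)"
      by (cases e) (auto simp: is_matching_def)
  qed
  also have "\<dots> = sum f (fst ` M) + sum g (snd ` M)"
    by (simp add: sum.distrib sum.reindex M)
  also have "\<dots> \<le> sum f U + sum g V"
    using M(1) assms(1,2,5,6) by (intro add_mono sum_mono2) auto
  finally show ?thesis .
qed

lemma dual_cover_sum_eq:
  fixes f :: "'u \<Rightarrow> real" and g :: "'v \<Rightarrow> real"
  assumes "finite U" "finite V" "E \<subseteq> U \<times> V" "is_matching E M"
    and "\<forall>u\<in>U - Domain M. f u = 0" "\<forall>v\<in>V - Range M. g v = 0"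
  shows "sum f U + sum g V = (\<Sum>(u, v)\<in>M. f u + g v)"
proof -
  have M: "Domain M \<subseteq> U" "Range M \<subseteq> V" "inj_on fst M" "inj_on snd M"
    using assms(3,4) by (auto simp: is_matching_def inj_on_def)
  have "sum f U + sum g V = sum f (Domain M) + sum g (Range M)"
    using assms(1,2,5,6) M by (simp add: sum.mono_neutral_right)
  also have "\<dots> = (\<Sum>(u, v)\<in>M. f u + g v)"
    by (simp add: fst_eq_Domain[symmetric] snd_eq_Range[symmetric] sum.reindex M sum.distrib case_prod_beta)
  finally show ?thesis .
qed

lemma is_matching_reassign:
  assumes "is_matching E M" "(u, c) \<in> E" "c \<notin> Range M"
  shows "is_matching E (insert (u, c) (M - {u} \<times> UNIV))"
  using assms unfolding is_matching_def by blast

locale auction =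
  fixes eps :: real and U :: "'u set" and V :: "'v set" and E :: "('u \<times> 'v) set"
    and w :: "'u \<times> 'v \<Rightarrow> real" and Q0 :: "'v \<Rightarrow> (int \<times> ('u \<times> 'v)) list"
  assumes finite_U: "finite U" and finite_V: "finite V" and edges: "E \<subseteq> U \<times> V"
    and weight_ge_1: "\<forall>e\<in>E. 1 \<le> w e"
    and eps_pos: "0 < eps" and eps_less_half: "eps < 1 / 2"
    and valid_Q0: "\<forall>v\<in>V. valid_queue eps E w v (Q0 v)"
begin

abbreviation level :: "int \<Rightarrow> real" where
  "level j \<equiv> (1 + eps) powr real_of_int j"

lemma level_pos: "0 < level j"
  using eps_pos by simp

lemma level_succ: "level (j + 1) = (1 + eps) * level j"
  using eps_pos by (simp add: powr_add)

lemma mem_Q0_iff: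
  assumes "v \<in> V"
  shows "(i, (u, v')) \<in> set (Q0 v) \<longleftrightarrow>
    v' = v \<and> (u, v) \<in> E \<and> - kmin eps \<le> i \<and> i \<le> jedge eps w (u, v)"
  using valid_Q0 assms unfolding valid_queue_def nbh_def by auto

text \<open>Since prices only rise, an entry that failed when it was removed keeps failing.\<close>

definition popped_bids_fail :: "('u \<Rightarrow> real) \<Rightarrow> ('v \<Rightarrow> (int \<times> ('u \<times> 'v)) list) \<Rightarrow> bool" where
  "popped_bids_fail y Q \<longleftrightarrow>
     (\<forall>v\<in>V. \<forall>k u. (k, (u, v)) \<in> set (Q0 v) - set (Q v) \<longrightarrow> w (u, v) - y u < level k)"

lemma util_lt_level_succ:
  assumes "popped_bids_fail y Q" "v \<in> V" "(u, v) \<in> E" "0 \<le> y u"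
    and "- kmin eps \<le> j" "\<forall>p\<in>set (Q v). fst p \<le> j"
  shows "w (u, v) - y u < level (j + 1)"
proof (cases "j + 1 \<le> jedge eps w (u, v)")
  case True
  then have "(j + 1, (u, v)) \<in> set (Q0 v) - set (Q v)"
    using assms(2,3,5,6) by (auto simp: mem_Q0_iff)
  then show ?thesis
    using assms(1,2) unfolding popped_bids_fail_def by blast
next
  case False
  have "0 < w (u, v)"
    using weight_ge_1 assms(3) by fastforce
  then have "w (u, v) < level (jedge eps w (u, v) + 1)"
    using less_powr_iLog_succ[OF eps_pos] by (simp add: jedge_def)
  also have "\<dots> \<le> level (j + 1)"
    using False eps_pos by (intro powr_mono) auto
  finally show ?thesis
    using assms(4) by simp
qed

lemma util_after_bid_lt_level:
  assumes "t < level (j + 1)"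
  shows "(1 - eps) * t < level j"
proof -
  have "(1 - eps) * t < (1 - eps) * ((1 + eps) * level j)"
    using assms[unfolded level_succ] eps_less_half by (intro mult_strict_left_mono) auto
  also have "\<dots> \<le> level j"
    using level_pos[of j] eps_pos by (simp add: algebra_simps)
  finally show ?thesis .
qed

lemma queue_head:
  assumes "c \<in> V" "q = drop n (Q0 c)" "q = (j, (u, v)) # rest"
  shows "v = c" "(u, c) \<in> E" "- kmin eps \<le> j" "\<forall>p\<in>set q. fst p \<le> j"
    and "rest = drop (Suc n) (Q0 c)"
proof -
  have "(j, (u, v)) \<in> set (Q0 c)"
    using assms(2,3) by (metis in_set_dropD list.set_intros(1))
  then show "v = c" "(u, c) \<in> E" "- kmin eps \<le> j"
    using assms(1) by (auto simp: mem_Q0_iff)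
  have "sorted_wrt (\<lambda>a b. fst b \<le> fst a) q"
    using valid_Q0 assms(1,2) by (simp add: valid_queue_def)
  then show "\<forall>p\<in>set q. fst p \<le> j"
    using assms(3) by auto
  show "rest = drop (Suc n) (Q0 c)"
    using assms(2,3) by (metis drop_Suc list.sel(3) tl_drop)
qed

lemma popped_bids_fail_pop:
  assumes "popped_bids_fail y Q" "\<forall>x. y x \<le> y' x" "Q c = (j, (u, c)) # rest"
    and "w (u, c) - y' u < level j"
  shows "popped_bids_fail y' (Q(c := rest))"
  unfolding popped_bids_fail_def
proof (intro ballI allI impI)
  fix v k u'
  assume v: "v \<in> V" and popped: "(k, (u', v)) \<in> set (Q0 v) - set ((Q(c := rest)) v)"
  show "w (u', v) - y' u' < level k"
  proof (cases "(k, (u', v)) = (j, (u, c))")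
    case True
    then show ?thesis
      using assms(4) by simp
  next
    case False
    then have "(k, (u', v)) \<in> set (Q0 v) - set (Q v)"
      using popped assms(3) by (auto split: if_splits)
    then have "w (u', v) - y u' < level k"
      using assms(1) v unfolding popped_bids_fail_def by blast
    then show ?thesis
      using spec[OF assms(2), of u'] by linarith
  qed
qed

fun bid_tight :: "('v \<Rightarrow> int) \<Rightarrow> ('v \<Rightarrow> (int \<times> ('u \<times> 'v)) list) \<Rightarrow> ('u \<Rightarrow> real) \<Rightarrow> 'u \<times> 'v \<Rightarrow> bool"
  where "bid_tight jv Q y (u, v) \<longleftrightarrow>
    - kmin eps \<le> jv v \<and> (\<forall>p\<in>set (Q v). fst p \<le> jv v) \<and> (1 - eps) * level (jv v) \<le> w (u, v) - y u"

text \<open>S is the set of vertices on which MatchR has been called so far.\<close>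

fun invar :: "'v set \<Rightarrow> ('u, 'v) state \<Rightarrow> bool" where
  "invar S (M, y, jv, Q) \<longleftrightarrow>
     is_matching E M \<and> (\<forall>u. 0 \<le> y u) \<and> (\<forall>u. y u \<noteq> 0 \<longrightarrow> u \<in> Domain M) \<and>
     (\<forall>v\<in>V. \<exists>n. Q v = drop n (Q0 v)) \<and> popped_bids_fail y Q \<and>
     Range M \<subseteq> S \<and> (\<forall>e\<in>M. bid_tight jv Q y e) \<and> (\<forall>v\<in>S - Range M. Q v = [])"

declare invar.simps [simp del]

lemma invar_Range_subset: "invar S (M, y, jv, Q) \<Longrightarrow> Range M \<subseteq> S"
  by (simp add: invar.simps)

lemma invar_init: "invar {} ({}, \<lambda>_. 0, jv, Q0)"
  by (auto simp: invar.simps is_matching_def popped_bids_fail_def intro: exI[of _ 0])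

lemma empty_step: "invar S (M, y, jv, Q) \<Longrightarrow> Q c = [] \<Longrightarrow> invar (insert c S) (M, y, jv, Q)"
  by (auto simp: invar.simps)

lemma fail_step:
  assumes I: "invar S (M, y, jv, Q)" and c: "c \<in> V" "c \<notin> Range M"
    and hd: "Q c = (j, (u, v)) # rest" and fail: "w (u, v) - y u < level j"
  shows "invar S (M, y, jv(c := j), Q(c := rest))"
proof -
  obtain n where n: "Q c = drop n (Q0 c)"
    using I c by (auto simp: invar.simps)
  note head = queue_head[OF c(1) n hd]
  have "popped_bids_fail y (Q(c := rest))"
    using I hd fail head(1) by (intro popped_bids_fail_pop[of y Q]) (auto simp: invar.simps)
  moreover have "bid_tight (jv(c := j)) (Q(c := rest)) y e" if "e \<in> M" for e
  proof -
    have "bid_tight jv Q y e" "snd e \<noteq> c"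
      using I c(2) that by (auto simp: invar.simps snd_eq_Range[symmetric])
    then show ?thesis
      by (cases e) simp
  qed
  ultimately show ?thesis
    using I c hd head(5) by (auto simp: invar.simps)
qed

lemma bid_price_update:
  assumes I: "invar S (M, y, jv, Q)" and c: "c \<in> V"
    and hd: "Q c = (j, (u, v)) # rest" and bid: "level j \<le> w (u, v) - y u"
  defines "y' \<equiv> y(u := y u + eps * (w (u, v) - y u))"
  shows "v = c" "\<forall>x. y x \<le> y' x" "(1 - eps) * level j \<le> w (u, c) - y' u"
    and "popped_bids_fail y' (Q(c := rest))"
proof -
  obtain n where n: "Q c = drop n (Q0 c)"
    using I c by (auto simp: invar.simps)
  note head = queue_head[OF c(1) n hd]
  show "v = c"
    by (rule head(1))
  define t where "t = w (u, c) - y u"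
  have t_ge: "level j \<le> t"
    using bid head(1) by (simp add: t_def)
  have "t < level (j + 1)"
    unfolding t_def using I c head by (intro util_lt_level_succ) (auto simp: invar.simps)
  then have util_lt: "(1 - eps) * t < level j"
    by (rule util_after_bid_lt_level)
  have util_new: "w (u, c) - y' u = (1 - eps) * t"
    using head(1) by (simp add: y'_def t_def algebra_simps)
  have "0 \<le> t"
    using t_ge level_pos[of j] by linarith
  then show y_le: "\<forall>x. y x \<le> y' x"
    using eps_pos head(1) by (simp add: y'_def t_def)
  show "(1 - eps) * level j \<le> w (u, c) - y' u"
    using t_ge eps_less_half util_new by simp
  show "popped_bids_fail y' (Q(c := rest))"
    using I y_le hd util_lt util_new head(1)
    by (intro popped_bids_fail_pop[of y Q]) (auto simp: invar.simps)
qed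

lemma bid_step:
  assumes I: "invar S (M, y, jv, Q)" and c: "c \<in> V" "c \<notin> Range M"
    and hd: "Q c = (j, (u, v)) # rest" and bid: "level j \<le> w (u, v) - y u"
  defines "y' \<equiv> y(u := y u + eps * (w (u, v) - y u))"
    and "M' \<equiv> insert (u, c) (M - {u} \<times> UNIV)"
  shows "v = c" and "invar (insert c (S - M `` {u})) (M', y', jv(c := j), Q(c := rest))"
proof -
  obtain n where n: "Q c = drop n (Q0 c)"
    using I c by (auto simp: invar.simps)
  note head = queue_head[OF c(1) n hd]
  note price = bid_price_update[OF I c(1) hd bid, folded y'_def]
  show "v = c"
    by (rule head(1))
  have "is_matching E M'"
    unfolding M'_def using I c(2) head(2) by (intro is_matching_reassign) (auto simp: invar.simps)
  moreover have unique_u: "a = u" if "(a, b) \<in> M" "(u, b) \<in> M" for a b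
    using I that by (auto simp: invar.simps is_matching_def)
  moreover have "bid_tight (jv(c := j)) (Q(c := rest)) y' e" if "e \<in> M'" for e
  proof (cases "e = (u, c)")
    case True
    then show ?thesis
      using head(3,4) hd price(3) by auto
  next
    case False
    then have "e \<in> M - {u} \<times> UNIV"
      using that unfolding M'_def by blast
    moreover from this have "bid_tight jv Q y e" "snd e \<noteq> c"
      using I c(2) by (auto simp: invar.simps snd_eq_Range[symmetric])
    ultimately show ?thesis
      by (cases e) (auto simp: y'_def)
  qed
  moreover have "0 \<le> y' x" for x
    using I price(2) by (simp add: invar.simps) (meson order_trans)
  moreover have "x \<in> Domain M'" if "y' x \<noteq> 0" for x
    using I that unfolding M'_def y'_def by (cases "x = u") (auto simp: invar.simps)
  ultimately show "invar (insert c (S - M `` {u})) (M', y', jv(c := j), Q(c := rest))"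
    using I price(4) head(5) unfolding invar.simps M'_def by auto
qed

lemma free_step:
  assumes I: "invar S (M, y, jv, Q)" and c: "c \<in> V" "c \<notin> Range M"
    and hd: "Q c = (j, (u, v)) # rest" and bid: "level j \<le> w (u, v) - y u"
    and free: "u \<notin> Domain M"
  shows "invar (insert c S)
    (insert (u, v) M, y(u := y u + eps * (w (u, v) - y u)), jv(c := j), Q(c := rest))"
proof -
  have "M - {u} \<times> UNIV = M" "M `` {u} = {}"
    using free by auto
  then show ?thesis
    using bid_step[OF I c hd bid] by simp
qed

lemma steal_step:
  assumes I: "invar S (M, y, jv, Q)" and c: "c \<in> V" "c \<notin> Range M"
    and hd: "Q c = (j, (u, v)) # rest" and bid: "level j \<le> w (u, v) - y u"
    and uv': "(u, v') \<in> M"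
  defines "M' \<equiv> insert (u, v) (M - {(u, v')})"
  shows "invar (insert c (S - {v'}))
      (M', y(u := y u + eps * (w (u, v) - y u)), jv(c := j), Q(c := rest))"
    and "v' \<in> V" "v' \<notin> Range M'" "insert v' (insert c (S - {v'})) = insert c S"
proof -
  have match: "is_matching E M" and range: "Range M \<subseteq> S"
    using I by (auto simp: invar.simps)
  have "M - {u} \<times> UNIV = M - {(u, v')}" "M `` {u} = {v'}"
    using match uv' by (auto simp: is_matching_def)
  then show "invar (insert c (S - {v'}))
      (M', y(u := y u + eps * (w (u, v) - y u)), jv(c := j), Q(c := rest))"
    using bid_step[OF I c hd bid] by (simp add: M'_def)
  show "v' \<in> V"
    using match uv' edges by (auto simp: is_matching_def)
  show "v' \<notin> Range M'"
    using match uv' c(2) bid_step(1)[OF I c hd bid] by (auto simp: M'_def is_matching_def)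
  show "insert v' (insert c (S - {v'})) = insert c S"
    using uv' range by auto
qed

lemma matchR_invar:
  "matchR eps w c s s' \<Longrightarrow> invar S s \<Longrightarrow> c \<in> V \<Longrightarrow> c \<notin> Range (fst s) \<Longrightarrow>
    invar (insert c S) s'"
proof (induction arbitrary: S rule: matchR.induct)
  case (empty Q c M y jv)
  then show ?case
    by (simp add: empty_step)
next
  case (fail Q c j u v rest y M jv s')
  then show ?case
    using fail_step by simp
next
  case (free Q c j u v rest y M jv)
  then show ?case
    by (simp add: free_step Domain_iff)
next
  case (steal Q c j u v rest y v' M jv s')
  note step = steal_step[OF steal.prems(1,2) _ steal.hyps(1,2,3)]
  show ?case
    using steal.IH[OF step(1)] step(2-4) steal.prems(3) by simp
qed

lemma queue_length_pop:
  assumes "c \<in> V" "Q c = x # rest"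
  shows "(\<Sum>v\<in>V. length ((Q(c := rest)) v)) < (\<Sum>v\<in>V. length (Q v))"
proof -
  have "(\<Sum>v\<in>V. length ((Q(c := rest)) v)) = length rest + (\<Sum>v\<in>V - {c}. length (Q v))"
    using finite_V assms(1) by (simp add: sum.remove)
  also have "\<dots> < (\<Sum>v\<in>V. length (Q v))"
    using finite_V assms by (simp add: sum.remove)
  finally show ?thesis .
qed

lemma matchR_exists:
  "invar S (M, y, jv, Q) \<Longrightarrow> c \<in> V \<Longrightarrow> c \<notin> Range M \<Longrightarrow> \<exists>s'. matchR eps w c (M, y, jv, Q) s'"
proof (induction "\<Sum>v\<in>V. length (Q v)" arbitrary: S M y jv Q c rule: less_induct)
  case less
  show ?case
  proof (cases "Q c")
    case Nil
    then show ?thesis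
      by (blast intro: matchR.empty)
  next
    case (Cons x rest)
    obtain j u v where hd: "Q c = (j, (u, v)) # rest"
      using Cons by (cases x) auto
    note IH = less.hyps[OF queue_length_pop[of c Q, OF less.prems(2) hd]]
    consider (fail) "w (u, v) - y u < level j"
      | (free) "level j \<le> w (u, v) - y u" "u \<notin> Domain M"
      | (steal) v' where "level j \<le> w (u, v) - y u" "(u, v') \<in> M"
      by force
    then show ?thesis
    proof cases
      case fail
      then show ?thesis
        using IH[OF fail_step[OF less.prems hd fail] less.prems(2,3)] hd
        by (blast intro: matchR.fail)
    next
      case free
      then show ?thesis
        using hd by (blast intro: matchR.free)
    next
      case steal
      note step = steal_step[OF less.prems hd steal]
      show ?thesis
        using IH[OF step(1-3)] hd steal by (blast intro: matchR.steal)
    qed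
  qed
qed

lemma loop_invar:
  "alg_loop eps w cs s s' \<Longrightarrow> invar S s \<Longrightarrow> set cs \<subseteq> V \<Longrightarrow> distinct cs \<Longrightarrow>
    set cs \<inter> S = {} \<Longrightarrow> invar (S \<union> set cs) s'"
proof (induction arbitrary: S rule: alg_loop.induct)
  case (nil s)
  then show ?case
    by simp
next
  case (cons c s s' cs s'')
  have "c \<notin> Range (fst s)"
    using cons.prems invar_Range_subset by (cases s) fastforce
  then have "invar (insert c S) s'"
    using matchR_invar[OF cons.hyps(1)] cons.prems by simp
  then show ?case
    using cons.IH[of "insert c S"] cons.prems by simp
qed

lemma loop_exists:
  "invar S s \<Longrightarrow> set cs \<subseteq> V \<Longrightarrow> distinct cs \<Longrightarrow> set cs \<inter> S = {} \<Longrightarrow>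
    \<exists>s'. alg_loop eps w cs s s'"
proof (induction cs arbitrary: S s)
  case Nil
  then show ?case
    by (blast intro: alg_loop.nil)
next
  case (Cons c cs)
  obtain M y jv Q where s: "s = (M, y, jv, Q)"
    by (cases s)
  have "c \<notin> Range M"
    using Cons.prems invar_Range_subset s by fastforce
  then obtain s' where step: "matchR eps w c s s'"
    using matchR_exists Cons.prems s by fastforce
  then have "invar (insert c S) s'"
    using matchR_invar \<open>c \<notin> Range M\<close> Cons.prems s by simp
  then obtain s'' where "alg_loop eps w cs s' s''"
    using Cons.IH[of "insert c S" s'] Cons.prems by auto
  then show ?case
    using step by (blast intro: alg_loop.cons)
qed

lemma invar_cover:
  assumes I: "invar V (M, y, jv, Q)" and uv: "(u, v) \<in> E"
  shows "w (u, v) \<le> y u / (1 - eps) + (if v \<in> Range M then level (jv v + 1) else 0)"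
proof -
  have v: "v \<in> V"
    using uv edges by auto
  have y: "0 \<le> y u" and popped: "popped_bids_fail y Q"
    using I by (auto simp: invar.simps)
  have y_le: "y u \<le> y u / (1 - eps)"
    using y eps_pos eps_less_half by (simp add: field_simps)
  show ?thesis
  proof (cases "v \<in> Range M")
    case True
    then obtain a where "(a, v) \<in> M"
      by blast
    then have "bid_tight jv Q y (a, v)"
      using I unfolding invar.simps by blast
    then have "w (u, v) - y u < level (jv v + 1)"
      using util_lt_level_succ[OF popped v uv y] by simp
    then show ?thesis
      using True y_le by simp
  next
    case False
    then have "Q v = []"
      using I v by (auto simp: invar.simps)
    moreover have "0 \<le> jedge eps w (u, v)"
      using weight_ge_1 uv eps_pos by (simp add: jedge_def iLog_nonneg)
    ultimately have "(- kmin eps, (u, v)) \<in> set (Q0 v) - set (Q v)"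
      using v uv kmin_nonneg[of eps] by (auto simp: mem_Q0_iff)
    then have "w (u, v) - y u < level (- kmin eps)"
      using popped v unfolding popped_bids_fail_def by blast
    also have "\<dots> \<le> eps"
      using level_neg_kmin_le[OF eps_pos] by simp
    also have "\<dots> \<le> eps * w (u, v)"
      using weight_ge_1 uv eps_pos by simp
    finally have "(1 - eps) * w (u, v) < y u"
      by (simp add: algebra_simps)
    then show ?thesis
      using False eps_less_half by (simp add: field_simps)
  qed
qed

lemma matched_weight_ge:
  assumes I: "invar S (M, y, jv, Q)" and uv: "(u, v) \<in> M"
  shows "(1 - 2 * eps) * (y u / (1 - eps) + level (jv v + 1)) \<le> w (u, v)"
proof -
  have "bid_tight jv Q y (u, v)"
    using I uv unfolding invar.simps by blast
  then have tight: "(1 - eps) * level (jv v) \<le> w (u, v) - y u"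
    by simp
  have "0 \<le> y u"
    using I by (simp add: invar.simps)
  then have "(1 - 2 * eps) * (y u / (1 - eps)) \<le> y u"
    using eps_pos eps_less_half by (simp add: field_simps mult_left_mono)
  moreover have "(1 - 2 * eps) * (1 + eps) * level (jv v) \<le> (1 - eps) * level (jv v)"
    using level_pos[of "jv v"] eps_pos by (intro mult_right_mono) (auto simp: algebra_simps)
  moreover have "(1 - 2 * eps) * (y u / (1 - eps) + level (jv v + 1)) =
      (1 - 2 * eps) * (y u / (1 - eps)) + (1 - 2 * eps) * (1 + eps) * level (jv v)"
    unfolding level_succ by (simp add: algebra_simps)
  ultimately show ?thesis
    using tight by linarith
qed

lemma invar_approximation:
  assumes I: "invar V (M, y, jv, Q)" and opt: "is_matching E M'"
  shows "(1 - 2 * eps) * sum w M' \<le> sum w M"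
proof -
  define f where "f u = y u / (1 - eps)" for u
  define g where "g v = (if v \<in> Range M then level (jv v + 1) else 0)" for v
  have M: "is_matching E M" and y: "\<forall>u. 0 \<le> y u" "\<forall>u. y u \<noteq> 0 \<longrightarrow> u \<in> Domain M"
    using I by (auto simp: invar.simps)
  have "\<forall>(u, v)\<in>E. w (u, v) \<le> f u + g v"
    using invar_cover[OF I] unfolding f_def g_def by blast
  then have "sum w M' \<le> sum f U + sum g V"
    using finite_U finite_V edges opt y(1) eps_less_half
    by (intro sum_le_dual_cover) (auto simp: f_def g_def)
  also have "\<dots> = (\<Sum>(u, v)\<in>M. f u + g v)"
    using finite_U finite_V edges M y(2) by (intro dual_cover_sum_eq) (auto simp: f_def g_def)
  finally have "(1 - 2 * eps) * sum w M' \<le> (\<Sum>(u, v)\<in>M. (1 - 2 * eps) * (f u + g v))"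
    using eps_less_half by (simp add: sum_distrib_left[symmetric] case_prod_beta)
  also have "\<dots> \<le> sum w M"
    using matched_weight_ge[OF I] by (intro sum_mono) (auto simp: f_def g_def)
  finally show ?thesis .
qed

end

theorem lemma2:
  fixes U :: "'u set" and V :: "'v set" and E :: "('u \<times> 'v) set"
    and w :: "'u \<times> 'v \<Rightarrow> real" and eps' :: real
    and Q0 :: "'v \<Rightarrow> (int \<times> ('u \<times> 'v)) list" and vs :: "'v list"
  assumes "finite U" and "finite V" and "E \<subseteq> U \<times> V"
    and "\<forall>e\<in>E. w e \<ge> 1"
    and "0 < eps'" and "eps' < 1"
    and "\<forall>v\<in>V. valid_queue (eps' / 2) E w v (Q0 v)"
    and "distinct vs" and "set vs = V"
  shows "(\<exists>M. algA (eps' / 2) E w Q0 vs M) \<and>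
         (\<forall>M. algA (eps' / 2) E w Q0 vs M \<longrightarrow>
            is_matching E M \<and>
            (\<forall>Mopt. is_matching E Mopt \<longrightarrow> sum w M \<ge> (1 - eps') * sum w Mopt))"
proof -
  interpret auction "eps' / 2" U V E w Q0
    using assms by unfold_locales auto
  let ?s0 = "({}, \<lambda>_. 0 :: real, \<lambda>_. kmax (eps' / 2) E w, Q0)"
  have init: "invar {} ?s0"
    by (rule invar_init)
  obtain s where "alg_loop (eps' / 2) w vs ?s0 s"
    using loop_exists[OF init, of vs] assms(8,9) by blast
  then have "\<exists>M. algA (eps' / 2) E w Q0 vs M"
    unfolding algA_def by (cases s) blast
  moreover have "is_matching E M \<and>
      (\<forall>Mopt. is_matching E Mopt \<longrightarrow> (1 - eps') * sum w Mopt \<le> sum w M)"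
    if alg: "algA (eps' / 2) E w Q0 vs M" for M
  proof -
    obtain y jv Q where "alg_loop (eps' / 2) w vs ?s0 (M, y, jv, Q)"
      using alg unfolding algA_def by blast
    then have "invar V (M, y, jv, Q)"
      using loop_invar[OF _ init] assms(8,9) by fastforce
    then show ?thesis
      using invar_approximation by (auto simp: invar.simps)
  qed
  ultimately show ?thesis
    by blast
qed

end
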